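(* Fix an integer $k$ and let $\mathcal V_k$ be as defined in the context. Define constants $M_{t,j}$ as in the context. Then the max-min problem $$\max_{v\in\mathcal V_k}\ \min_{y\in[0,1]^{\mathcal N}}\Big\{\sum_{i=1}^m\alpha_iy_{J_i} : y_{J''}-y_J\le1-v_t,\ y_{J''}-y_{J'}\le1-v_t,\ y_J+y_{J'}-y_{J''}\le2-v_t\ \ \forall t=(J,J',J'')\in\mathcal T\Big\}$$ is equivalent to the mixed-integer program $$\max\ -\sum_{t\in\mathcal T}\lambda_{t,3}-\sum_{J\in\mathcal N}\mu_J$$ over $v\in\mathcal V_k$, $\lambda=(\lambda_{t,j})_{t\in\mathcal T,j=1,2,3}\ge0$, $\mu=(\mu_J)_{J\in\mathcal N}\ge0$, subject to, for every $J\in\mathcal N$, $\beta_J+\sum_{t:\mathsf{tail1}(t)=J}(-\lambda_{t,1}+\lambda_{t,3})+\sum_{t:\mathsf{tail2}(t)=J}(-\lambda_{t,2}+\lambda_{t,3})+\sum_{t:\mathsf{head}(t)=J}(\lambda_{t,1}+\lambda_{t,2}-\lambda_{t,3})+\mu_J\ge0,$ and $\lambda_{t,j}\le M_{t,j}v_t$ for all $t\in\mathcal T$, $j=1,2,3$; in the sense that for each fixed $v\in\mathcal V_k$ the value of the inner minimization equals the maximum of the MIP objective over $(\lambda,\mu)$ with that $v$, so the two problems have the same optimal value and the same maximizing vectors $v$.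
   Context: A multilinear program has data $n,m$, coefficients $\alpha_i\in\mathbb{R}$ and nonempty index sets $J_i\subseteq[n]$. Let $\mathcal N_i=\{J:\emptyset\ne J\subseteq J_i\}$, $\mathcal N=\bigcup_i\mathcal N_i$, $\beta_J=\sum_{i:J_i=J}\alpha_i$ for $J\in\mathcal N$, and $\eta=-\sum_i\min(0,\alpha_i)$. A triple is $t=(J,J',J'')$ with $J''\in\mathcal N$, $|J''|\ge2$, $J,J'$ nonempty, disjoint, $J\cup J'=J''$, listed with $J,J'$ in lexicographic order; $\mathsf{tail1}(t)=J$, $\mathsf{tail2}(t)=J'$, $\mathsf{head}(t)=J''$, $\mathsf{tails}(t)=\{J,J'\}$. $\mathcal T$ is the set of all triples and $\mathcal T_i=\{t\in\mathcal T:\mathsf{head}(t)\in\mathcal N_i\}$. $\mathcal V$ is the set of $v\in\{0,1\}^{\mathcal T}$ for which there exist $u_i\in\{0,1\}^{\mathcal T_i}$ ($i\in[m]$) with: $\sum_{t\in\mathcal T_i:\mathsf{head}(t)=J_i}u_{i,t}=1$ for all $i$ with $|J_i|>1$; $\sum_{t\in\mathcal T_i:\mathsf{head}(t)=J}u_{i,t}=\sum_{t\in\mathcal T_i:J\in\mathsf{tails}(t)}u_{i,t}$ for all $i$ and all $J\in\mathcal N_i$ with $2\le|J|<|J_i|$; and $u_{i,t}\le v_t$ for all $i$, $t\in\mathcal T_i$. $\mathcal V_k=\{v\in\mathcal V:\|v\|_1\le k\}$. The constants: $M_{t,3}=\eta$ for all $t$; for $j=1,2$ define recursively by increasing $|J|$: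 $R_J=\max\big(0,\ \beta_J+\eta+\sum_{t\in\mathcal T:\mathsf{head}(t)=J}(M_{t,1}+M_{t,2})\big)$ (the sum is empty when $|J|=1$), and set $M_{t,1}=R_{\mathsf{tail1}(t)}$, $M_{t,2}=R_{\mathsf{tail2}(t)}$ (well defined since tails are strictly smaller than heads). *)

theory Defs
  imports Complex_Main
begin

type_synonym triple = "nat set \<times> nat set \<times> nat set"

definition Ni :: "(nat \<Rightarrow> nat set) \<Rightarrow> nat \<Rightarrow> nat set set" where
  "Ni Js i = {J. J \<noteq> {} \<and> J \<subseteq> Js i}"

definition Nd :: "nat \<Rightarrow> (nat \<Rightarrow> nat set) \<Rightarrow> nat set set" where
  "Nd m Js = (\<Union>i\<in>{1..m}. Ni Js i)"

definition beta :: "nat \<Rightarrow> (nat \<Rightarrow> real) \<Rightarrow> (nat \<Rightarrow> nat set) \<Rightarrow> nat set \<Rightarrow> real" where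
  "beta m \<alpha> Js J = (\<Sum>i | i \<in> {1..m} \<and> Js i = J. \<alpha> i)"

definition eta :: "nat \<Rightarrow> (nat \<Rightarrow> real) \<Rightarrow> real" where
  "eta m \<alpha> = - (\<Sum>i\<in>{1..m}. min 0 (\<alpha> i))"

definition lex_less :: "nat set \<Rightarrow> nat set \<Rightarrow> bool" where
  "lex_less J J' \<longleftrightarrow> (sorted_list_of_set J, sorted_list_of_set J') \<in> lexord {(a, b). a < b}"

definition tail1 :: "triple \<Rightarrow> nat set" where "tail1 t = fst t"
definition tail2 :: "triple \<Rightarrow> nat set" where "tail2 t = fst (snd t)"
definition head :: "triple \<Rightarrow> nat set" where "head t = snd (snd t)"

definition Trip :: "nat \<Rightarrow> (nat \<Rightarrow> nat set) \<Rightarrow> triple set" where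
  "Trip m Js = {(J, J', J''). J'' \<in> Nd m Js \<and> 2 \<le> card J'' \<and> J \<noteq> {} \<and> J' \<noteq> {}
      \<and> J \<inter> J' = {} \<and> J \<union> J' = J'' \<and> lex_less J J'}"

definition Trip_i :: "nat \<Rightarrow> (nat \<Rightarrow> nat set) \<Rightarrow> nat \<Rightarrow> triple set" where
  "Trip_i m Js i = {t \<in> Trip m Js. head t \<in> Ni Js i}"

definition Vset :: "nat \<Rightarrow> (nat \<Rightarrow> nat set) \<Rightarrow> (triple \<Rightarrow> real) set" where
  "Vset m Js = {v. (\<forall>t\<in>Trip m Js. v t \<in> {0, 1}) \<and> (\<forall>t. t \<notin> Trip m Js \<longrightarrow> v t = 0) \<and>
     (\<exists>u :: nat \<Rightarrow> triple \<Rightarrow> real.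
        (\<forall>i\<in>{1..m}. \<forall>t\<in>Trip_i m Js i. u i t \<in> {0, 1}) \<and>
        (\<forall>i\<in>{1..m}. 1 < card (Js i) \<longrightarrow>
            (\<Sum>t | t \<in> Trip_i m Js i \<and> head t = Js i. u i t) = 1) \<and>
        (\<forall>i\<in>{1..m}. \<forall>J\<in>Ni Js i. 2 \<le> card J \<and> card J < card (Js i) \<longrightarrow>
            (\<Sum>t | t \<in> Trip_i m Js i \<and> head t = J. u i t)
          = (\<Sum>t | t \<in> Trip_i m Js i \<and> J \<in> {tail1 t, tail2 t}. u i t)) \<and>
        (\<forall>i\<in>{1..m}. \<forall>t\<in>Trip_i m Js i. u i t \<le> v t))}"

definition Vk :: "nat \<Rightarrow> (nat \<Rightarrow> nat set) \<Rightarrow> int \<Rightarrow> (triple \<Rightarrow> real) set" where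
  "Vk m Js k = {v \<in> Vset m Js. (\<Sum>t\<in>Trip m Js. \<bar>v t\<bar>) \<le> of_int k}"

text \<open>R_J defined by recursion on |J|, realised with a fuel argument d:
  tails of a triple with head J have strictly smaller cardinality, so fuel card J suffices.\<close>
fun Raux :: "nat \<Rightarrow> (nat \<Rightarrow> real) \<Rightarrow> (nat \<Rightarrow> nat set) \<Rightarrow> nat \<Rightarrow> nat set \<Rightarrow> real" where
  "Raux m \<alpha> Js 0 J = max 0 (beta m \<alpha> Js J + eta m \<alpha>)"
| "Raux m \<alpha> Js (Suc d) J = max 0 (beta m \<alpha> Js J + eta m \<alpha> +
     (\<Sum>t | t \<in> Trip m Js \<and> head t = J. Raux m \<alpha> Js d (tail1 t) + Raux m \<alpha> Js d (tail2 t)))"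

definition Rc :: "nat \<Rightarrow> (nat \<Rightarrow> real) \<Rightarrow> (nat \<Rightarrow> nat set) \<Rightarrow> nat set \<Rightarrow> real" where
  "Rc m \<alpha> Js J = Raux m \<alpha> Js (card J) J"

definition Mc :: "nat \<Rightarrow> (nat \<Rightarrow> real) \<Rightarrow> (nat \<Rightarrow> nat set) \<Rightarrow> triple \<Rightarrow> nat \<Rightarrow> real" where
  "Mc m \<alpha> Js t j = (if j = 1 then Rc m \<alpha> Js (tail1 t)
                    else if j = 2 then Rc m \<alpha> Js (tail2 t) else eta m \<alpha>)"

definition inner_feas :: "nat \<Rightarrow> (nat \<Rightarrow> nat set) \<Rightarrow> (triple \<Rightarrow> real) \<Rightarrow> (nat set \<Rightarrow> real) \<Rightarrow> bool" where
  "inner_feas m Js v y \<longleftrightarrow> (\<forall>J\<in>Nd m Js. 0 \<le> y J \<and> y J \<le> 1) \<and>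
     (\<forall>t\<in>Trip m Js. y (head t) - y (tail1 t) \<le> 1 - v t \<and>
                     y (head t) - y (tail2 t) \<le> 1 - v t \<and>
                     y (tail1 t) + y (tail2 t) - y (head t) \<le> 2 - v t)"

definition inner_obj :: "nat \<Rightarrow> (nat \<Rightarrow> real) \<Rightarrow> (nat \<Rightarrow> nat set) \<Rightarrow> (nat set \<Rightarrow> real) \<Rightarrow> real" where
  "inner_obj m \<alpha> Js y = (\<Sum>i\<in>{1..m}. \<alpha> i * y (Js i))"

definition mip_feas :: "nat \<Rightarrow> (nat \<Rightarrow> real) \<Rightarrow> (nat \<Rightarrow> nat set) \<Rightarrow> (triple \<Rightarrow> real)
     \<Rightarrow> (triple \<Rightarrow> nat \<Rightarrow> real) \<Rightarrow> (nat set \<Rightarrow> real) \<Rightarrow> bool" where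
  "mip_feas m \<alpha> Js v lam mu \<longleftrightarrow>
     (\<forall>t\<in>Trip m Js. \<forall>j\<in>{1, 2, 3}. 0 \<le> lam t j \<and> lam t j \<le> Mc m \<alpha> Js t j * v t) \<and>
     (\<forall>J\<in>Nd m Js. 0 \<le> mu J) \<and>
     (\<forall>J\<in>Nd m Js. 0 \<le> beta m \<alpha> Js J
        + (\<Sum>t | t \<in> Trip m Js \<and> tail1 t = J. - lam t 1 + lam t 3)
        + (\<Sum>t | t \<in> Trip m Js \<and> tail2 t = J. - lam t 2 + lam t 3)
        + (\<Sum>t | t \<in> Trip m Js \<and> head t = J. lam t 1 + lam t 2 - lam t 3)
        + mu J)"

definition mip_obj :: "nat \<Rightarrow> (nat \<Rightarrow> nat set) \<Rightarrow> (triple \<Rightarrow> nat \<Rightarrow> real) \<Rightarrow> (nat set \<Rightarrow> real) \<Rightarrow> real" where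
  "mip_obj m Js lam mu = - (\<Sum>t\<in>Trip m Js. lam t 3) - (\<Sum>J\<in>Nd m Js. mu J)"

end

(*
  For fixed binary v the inner minimisation is a linear program: the three inequalities of a
  triple t with v_t = 0 follow from 0 <= y <= 1 and can be dropped.  Its LP dual is the MIP
  without the bounds lambda_{t,j} <= M_{t,j} v_t (with lambda_t = 0 whenever v_t = 0), so strong
  duality, which follows from Farkas' lemma by Fourier-Motzkin elimination, equates the two
  optimal values once the bounds are shown to cut off no optimal dual solution.

  To see this, take among the optimal dual solutions one minimising the sum of all
  lambda_{t,1} + lambda_{t,2}.  Moving weight from lambda_{t,j} and mu_{tail_j(t)} onto
  mu_{head(t)} keeps the solution feasible and optimal and lowers that sum, so mu_J = 0 whenever
  some lambda_{t,j} with tail_j(t) = J is positive.  The dual constraint at J then bounds the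
  outflow of J by beta_J + eta + (inflow of J), and induction on |J| gives
  lambda_{t,j} <= R_{tail_j(t)} = M_{t,j}.  Finally the lambda_{t,3} sum to at most eta = M_{t,3},
  because the optimal value is at least -eta.
*)

theory Submission
  imports Defs
begin

section \<open>Farkas' lemma\<close>

type_synonym 'v constraint = "('v \<Rightarrow> real) \<times> real"

definition fm_combine :: "'v \<Rightarrow> 'v constraint \<Rightarrow> 'v constraint \<Rightarrow> 'v constraint" where
  "fm_combine w p q =
     ((\<lambda>u. - fst q w * fst p u + fst p w * fst q u), - fst q w * snd p + fst p w * snd q)"

definition fm_eliminate :: "'v \<Rightarrow> 'v constraint set \<Rightarrow> 'v constraint set" where
  "fm_eliminate w C = {c \<in> C. fst c w = 0} \<union>
     case_prod (fm_combine w) ` ({p \<in> C. 0 < fst p w} \<times> {q \<in> C. fst q w < 0})"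

lemma finite_fm_eliminate: "finite C \<Longrightarrow> finite (fm_eliminate w C)"
  by (simp add: fm_eliminate_def)

lemma fm_eliminate_lift:
  assumes "finite C" "w \<notin> V" "finite V"
    and x: "\<forall>c\<in>fm_eliminate w C. (\<Sum>u\<in>V. fst c u * x u) \<le> snd c"
  shows "\<exists>s. \<forall>c\<in>C. (\<Sum>u\<in>insert w V. fst c u * (x(w := s)) u) \<le> snd c"
proof -
  define P where "P = {c \<in> C. 0 < fst c w}"
  define N where "N = {c \<in> C. fst c w < 0}"
  define S where "S c = (\<Sum>u\<in>V. fst c u * x u)" for c :: "'a constraint"
  \<comment> \<open>the value of \<open>w\<close> that makes constraint \<open>c\<close> tight\<close>
  define U where "U c = (snd c - S c) / fst c w" for c
  define s where "s = (if N = {} then (if P = {} then 0 else Min (U ` P)) else Max (U ` N))"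
  have fin: "finite P" "finite N" using assms(1) by (auto simp: P_def N_def)
  have sum_upd: "(\<Sum>u\<in>insert w V. fst c u * (x(w := s)) u) = fst c w * s + S c" for c
  proof -
    have "(\<Sum>u\<in>V. fst c u * (x(w := s)) u) = S c"
      unfolding S_def using assms(2) by (intro sum.cong) auto
    then show ?thesis using assms(2,3) by simp
  qed
  have U_le: "U q \<le> U p" if "p \<in> P" "q \<in> N" for p q
  proof -
    have "fm_combine w p q \<in> fm_eliminate w C"
      using that by (auto simp: fm_eliminate_def P_def N_def)
    then have "(\<Sum>u\<in>V. (- fst q w * fst p u + fst p w * fst q u) * x u)
        \<le> - fst q w * snd p + fst p w * snd q"
      using x by (fastforce simp: fm_combine_def)
    also have "(\<Sum>u\<in>V. (- fst q w * fst p u + fst p w * fst q u) * x u)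
        = - fst q w * S p + fst p w * S q"
      unfolding S_def sum_distrib_left sum.distrib[symmetric]
      by (intro sum.cong) (simp_all add: algebra_simps)
    finally have "- fst q w * S p + fst p w * S q \<le> - fst q w * snd p + fst p w * snd q" .
    moreover have "0 < fst p w" "fst q w < 0" using that by (auto simp: P_def N_def)
    ultimately show ?thesis by (simp add: U_def divide_simps algebra_simps)
  qed
  have "fst c w * s + S c \<le> snd c" if c: "c \<in> C" for c
  proof (cases "fst c w" "0 :: real" rule: linorder_cases)
    case equal
    then have "c \<in> fm_eliminate w C" using c by (simp add: fm_eliminate_def)
    then show ?thesis using x equal by (simp add: S_def)
  next
    case greater
    then have "c \<in> P" using c by (simp add: P_def)
    have "s \<le> U c"
    proof (cases "N = {}")
      case False
      then have "Max (U ` N) \<in> U ` N" using fin by (intro Max_in) auto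
      then obtain q where "q \<in> N" "Max (U ` N) = U q" by auto
      then show ?thesis using U_le[OF \<open>c \<in> P\<close>] False by (simp add: s_def)
    qed (use \<open>c \<in> P\<close> fin in \<open>auto simp: s_def\<close>)
    then show ?thesis using greater by (simp add: U_def pos_le_divide_eq mult.commute)
  next
    case less
    then have "c \<in> N" using c by (simp add: N_def)
    then have "U c \<le> s" using fin by (auto simp: s_def)
    then show ?thesis using less by (simp add: U_def neg_divide_le_eq mult.commute)
  qed
  then show ?thesis using sum_upd by metis
qed

lemma fm_eliminate_nonneg_combination:
  assumes "finite C" "c' \<in> fm_eliminate w C"
  shows "\<exists>z. (\<forall>c\<in>C. 0 \<le> z c) \<and> (\<forall>u. fst c' u = (\<Sum>c\<in>C. z c * fst c u))
           \<and> snd c' = (\<Sum>c\<in>C. z c * snd c) \<and> fst c' w = 0"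
proof (cases "c' \<in> C \<and> fst c' w = 0")
  case True
  then show ?thesis using assms(1) by (intro exI[of _ "\<lambda>c. of_bool (c = c')"]) simp
next
  case False
  then obtain p q where pq: "p \<in> C" "q \<in> C" "0 < fst p w" "fst q w < 0" "c' = fm_combine w p q"
    using assms(2) by (auto simp: fm_eliminate_def)
  define z where "z c = - fst q w * of_bool (c = p) + fst p w * of_bool (c = q)" for c
  have z_sum: "(\<Sum>c\<in>C. z c * g c) = - fst q w * g p + fst p w * g q" for g
  proof -
    have "(\<Sum>c\<in>C. z c * g c)
        = - fst q w * (\<Sum>c\<in>C. of_bool (c = p) * g c) + fst p w * (\<Sum>c\<in>C. of_bool (c = q) * g c)"
      unfolding sum_distrib_left sum.distrib[symmetric] z_def
      by (intro sum.cong) (simp_all add: algebra_simps)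
    then show ?thesis using pq assms(1) by simp
  qed
  have "0 \<le> z c" for c using pq by (simp add: z_def)
  then show ?thesis using pq by (intro exI[of _ z]) (simp add: z_sum fm_combine_def)
qed

lemma fm_eliminate_certificate:
  assumes "finite C"
    and y': "\<forall>c\<in>fm_eliminate w C. 0 \<le> y' c"
      "\<forall>u\<in>V. (\<Sum>c\<in>fm_eliminate w C. y' c * fst c u) = 0"
      "(\<Sum>c\<in>fm_eliminate w C. y' c * snd c) < 0"
  shows "\<exists>y. (\<forall>c\<in>C. 0 \<le> y c) \<and> (\<forall>u\<in>insert w V. (\<Sum>c\<in>C. y c * fst c u) = 0)
           \<and> (\<Sum>c\<in>C. y c * snd c) < 0"
proof -
  let ?C' = "fm_eliminate w C"
  have "\<forall>c'\<in>?C'. \<exists>z. (\<forall>c\<in>C. 0 \<le> z c) \<and> (\<forall>u. fst c' u = (\<Sum>c\<in>C. z c * fst c u))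
      \<and> snd c' = (\<Sum>c\<in>C. z c * snd c) \<and> fst c' w = 0"
    using fm_eliminate_nonneg_combination[OF assms(1)] by blast
  then obtain z where z: "\<forall>c'\<in>?C'. (\<forall>c\<in>C. 0 \<le> z c' c) \<and> (\<forall>u. fst c' u = (\<Sum>c\<in>C. z c' c * fst c u))
      \<and> snd c' = (\<Sum>c\<in>C. z c' c * snd c) \<and> fst c' w = 0"
    by (rule bchoice[elim_format]) blast
  define y where "y c = (\<Sum>c'\<in>?C'. y' c' * z c' c)" for c
  have y_sum: "(\<Sum>c\<in>C. y c * g c) = (\<Sum>c'\<in>?C'. y' c' * (\<Sum>c\<in>C. z c' c * g c))" for g
    unfolding y_def sum_distrib_right sum_distrib_left by (subst sum.swap) (simp add: algebra_simps)
  have "\<forall>c\<in>C. 0 \<le> y c" unfolding y_def using y'(1) z by (auto intro!: sum_nonneg)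
  moreover have "(\<Sum>c\<in>C. y c * fst c u) = (\<Sum>c'\<in>?C'. y' c' * fst c' u)" for u
    unfolding y_sum using z by (intro sum.cong) auto
  moreover have "(\<Sum>c\<in>C. y c * snd c) = (\<Sum>c'\<in>?C'. y' c' * snd c')"
    unfolding y_sum using z by (intro sum.cong) auto
  moreover have "\<forall>c'\<in>?C'. fst c' w = 0" using z by blast
  ultimately show ?thesis using y'(2,3) by (intro exI[of _ y]) simp
qed

lemma farkas_constraint_set:
  fixes V :: "'v set" and C :: "'v constraint set"
  assumes "finite V" "finite C"
  shows "(\<exists>x. \<forall>c\<in>C. (\<Sum>u\<in>V. fst c u * x u) \<le> snd c) \<or>
         (\<exists>y. (\<forall>c\<in>C. 0 \<le> y c) \<and> (\<forall>u\<in>V. (\<Sum>c\<in>C. y c * fst c u) = 0) \<and> (\<Sum>c\<in>C. y c * snd c) < 0)"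
  using assms
proof (induction V arbitrary: C rule: finite_induct)
  case empty
  show ?case
  proof (cases "\<forall>c\<in>C. 0 \<le> snd c")
    case False
    then obtain c0 where "c0 \<in> C" "snd c0 < 0" by auto
    then show ?thesis using empty.prems by (intro disjI2 exI[of _ "\<lambda>c. of_bool (c = c0)"]) simp
  qed auto
next
  case (insert w V)
  from insert.IH[OF finite_fm_eliminate[OF insert.prems, of w]] show ?case
  proof (elim disjE exE conjE)
    fix x assume "\<forall>c\<in>fm_eliminate w C. (\<Sum>u\<in>V. fst c u * x u) \<le> snd c"
    from fm_eliminate_lift[OF insert.prems insert.hyps(2,1) this] show ?thesis by blast
  next
    fix y assume "\<forall>c\<in>fm_eliminate w C. 0 \<le> y c" "\<forall>u\<in>V. (\<Sum>c\<in>fm_eliminate w C. y c * fst c u) = 0"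
      "(\<Sum>c\<in>fm_eliminate w C. y c * snd c) < 0"
    from fm_eliminate_certificate[OF insert.prems this] show ?thesis by blast
  qed
qed

lemma farkas:
  fixes a :: "'i \<Rightarrow> 'v \<Rightarrow> real" and b :: "'i \<Rightarrow> real"
  assumes "finite V" "finite I"
  shows "(\<exists>x. \<forall>i\<in>I. (\<Sum>u\<in>V. a i u * x u) \<le> b i) \<or>
         (\<exists>y. (\<forall>i\<in>I. 0 \<le> y i) \<and> (\<forall>u\<in>V. (\<Sum>i\<in>I. y i * a i u) = 0) \<and> (\<Sum>i\<in>I. y i * b i) < 0)"
proof -
  define f where "f i = (a i, b i)" for i
  from farkas_constraint_set[OF assms(1) finite_imageI[OF assms(2), of f]] show ?thesis
  proof (elim disjE exE conjE)
    fix x assume "\<forall>c\<in>f ` I. (\<Sum>u\<in>V. fst c u * x u) \<le> snd c"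
    then show ?thesis by (intro disjI1 exI[of _ x]) (simp add: f_def)
  next
    fix y assume y: "\<forall>c\<in>f ` I. 0 \<le> y c" "\<forall>u\<in>V. (\<Sum>c\<in>f ` I. y c * fst c u) = 0"
      "(\<Sum>c\<in>f ` I. y c * snd c) < 0"
    \<comment> \<open>several indices may carry the same constraint: put its weight on one representative\<close>
    define rep where "rep = inv_into I f"
    define y' where "y' i = (if i \<in> rep ` f ` I then y (f i) else 0)" for i
    have transfer: "(\<Sum>i\<in>I. y' i * g (f i)) = (\<Sum>c\<in>f ` I. y c * g c)" for g
    proof -
      have "rep ` f ` I \<subseteq> I" by (auto simp: rep_def inv_into_into)
      then have "(\<Sum>i\<in>I. y' i * g (f i)) = (\<Sum>i\<in>rep ` f ` I. y (f i) * g (f i))"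
        using assms(2) by (intro sum.mono_neutral_cong_right) (auto simp: y'_def)
      also have "\<dots> = (\<Sum>c\<in>f ` I. y (f (rep c)) * g (f (rep c)))"
        by (subst sum.reindex) (simp_all add: rep_def inj_on_inv_into)
      also have "\<dots> = (\<Sum>c\<in>f ` I. y c * g c)" by (simp add: rep_def f_inv_into_f)
      finally show ?thesis .
    qed
    have "\<forall>i\<in>I. 0 \<le> y' i" using y(1) by (auto simp: y'_def)
    moreover have "(\<Sum>i\<in>I. y' i * a i u) = 0" if "u \<in> V" for u
      using y(2) that transfer[of "\<lambda>c. fst c u"] by (simp add: f_def)
    moreover have "(\<Sum>i\<in>I. y' i * b i) < 0"
      using y(3) transfer[of snd] by (simp add: f_def)
    ultimately show ?thesis by (intro disjI2 exI[of _ y']) simp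
  qed
qed

section \<open>Linear programming duality\<close>

definition lp_primal_feasible ::
    "'x set \<Rightarrow> 'r set \<Rightarrow> ('r \<Rightarrow> 'x \<Rightarrow> real) \<Rightarrow> ('r \<Rightarrow> real) \<Rightarrow> ('x \<Rightarrow> real) \<Rightarrow> bool" where
  "lp_primal_feasible X R A b x \<longleftrightarrow> (\<forall>j\<in>X. 0 \<le> x j) \<and> (\<forall>r\<in>R. b r \<le> (\<Sum>j\<in>X. A r j * x j))"

definition lp_dual_feasible ::
    "'x set \<Rightarrow> 'r set \<Rightarrow> ('r \<Rightarrow> 'x \<Rightarrow> real) \<Rightarrow> ('x \<Rightarrow> real) \<Rightarrow> ('r \<Rightarrow> real) \<Rightarrow> bool" where
  "lp_dual_feasible X R A c y \<longleftrightarrow> (\<forall>r\<in>R. 0 \<le> y r) \<and> (\<forall>j\<in>X. (\<Sum>r\<in>R. y r * A r j) \<le> c j)"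

lemma lp_weak_duality:
  assumes "finite X" "finite R" "lp_primal_feasible X R A b x" "lp_dual_feasible X R A c y"
  shows "(\<Sum>r\<in>R. b r * y r) \<le> (\<Sum>j\<in>X. c j * x j)"
proof -
  have "(\<Sum>r\<in>R. b r * y r) \<le> (\<Sum>r\<in>R. (\<Sum>j\<in>X. A r j * x j) * y r)"
    using assms(3,4)
    by (intro sum_mono mult_right_mono) (auto simp: lp_primal_feasible_def lp_dual_feasible_def)
  also have "\<dots> = (\<Sum>j\<in>X. (\<Sum>r\<in>R. y r * A r j) * x j)"
    by (simp add: sum_distrib_left sum_distrib_right mult_ac sum.swap[of _ R])
  also have "\<dots> \<le> (\<Sum>j\<in>X. c j * x j)"
    using assms(3,4)
    by (intro sum_mono mult_right_mono) (auto simp: lp_primal_feasible_def lp_dual_feasible_def)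
  finally show ?thesis .
qed

text \<open>Strong duality is Farkas' lemma applied to the system in the variables \<open>(x, y)\<close>
  consisting of primal feasibility, dual feasibility and \<open>c \<bullet> x \<le> b \<bullet> y\<close>.\<close>

datatype ('x, 'r) duality_row = Primal_Row 'r | Primal_Sign 'x | Dual_Sign 'r | Dual_Row 'x | Gap

fun duality_coeff ::
    "('r \<Rightarrow> 'x \<Rightarrow> real) \<Rightarrow> ('r \<Rightarrow> real) \<Rightarrow> ('x \<Rightarrow> real) \<Rightarrow> ('x, 'r) duality_row \<Rightarrow> 'x + 'r \<Rightarrow> real"
where
  "duality_coeff A b c (Primal_Row r) u = (case u of Inl j \<Rightarrow> - A r j | Inr _ \<Rightarrow> 0)"
| "duality_coeff A b c (Primal_Sign j) u = - of_bool (u = Inl j)"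
| "duality_coeff A b c (Dual_Sign r) u = - of_bool (u = Inr r)"
| "duality_coeff A b c (Dual_Row j) u = (case u of Inl _ \<Rightarrow> 0 | Inr r \<Rightarrow> A r j)"
| "duality_coeff A b c Gap u = (case u of Inl j \<Rightarrow> c j | Inr r \<Rightarrow> - b r)"

fun duality_rhs :: "('r \<Rightarrow> real) \<Rightarrow> ('x \<Rightarrow> real) \<Rightarrow> ('x, 'r) duality_row \<Rightarrow> real" where
  "duality_rhs b c (Primal_Row r) = - b r"
| "duality_rhs b c (Dual_Row j) = c j"
| "duality_rhs b c _ = 0"

lemma sum_Inl_Inr:
  assumes "finite X" "finite R"
  shows "(\<Sum>u\<in>Inl ` X \<union> Inr ` R. f u) = (\<Sum>j\<in>X. f (Inl j)) + (\<Sum>r\<in>R. f (Inr r))"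
  using assms by (subst sum.union_disjoint) (auto simp: sum.reindex)

lemma sum_duality_rows:
  assumes "finite X" "finite R"
  shows "(\<Sum>i\<in>Primal_Row ` R \<union> Primal_Sign ` X \<union> Dual_Sign ` R \<union> Dual_Row ` X \<union> {Gap}. g i)
     = (\<Sum>r\<in>R. g (Primal_Row r)) + (\<Sum>j\<in>X. g (Primal_Sign j)) + (\<Sum>r\<in>R. g (Dual_Sign r))
       + (\<Sum>j\<in>X. g (Dual_Row j)) + g Gap"
  using assms
  by (subst sum.union_disjoint, force, force, force)+ (auto simp: sum.reindex inj_on_def)

theorem lp_strong_duality:
  assumes fin: "finite X" "finite R"
    and "lp_primal_feasible X R A b x0" "lp_dual_feasible X R A c y0"
  shows "\<exists>x y. lp_primal_feasible X R A b x \<and> lp_dual_feasible X R A c y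
           \<and> (\<Sum>j\<in>X. c j * x j) = (\<Sum>r\<in>R. b r * y r)"
proof -
  define V where "V = Inl ` X \<union> Inr ` R"
  define I where "I = Primal_Row ` R \<union> Primal_Sign ` X \<union> Dual_Sign ` R \<union> Dual_Row ` X \<union> {Gap}"
  have "finite V" "finite I" using fin by (auto simp: V_def I_def)
  from farkas[OF this, of "duality_coeff A b c" "duality_rhs b c"] show ?thesis
  proof (elim disjE exE conjE)
    fix z assume z: "\<forall>i\<in>I. (\<Sum>u\<in>V. duality_coeff A b c i u * z u) \<le> duality_rhs b c i"
    define x where "x j = z (Inl j)" for j
    define y where "y r = z (Inr r)" for r
    have row: "(\<Sum>j\<in>X. duality_coeff A b c i (Inl j) * x j)
        + (\<Sum>r\<in>R. duality_coeff A b c i (Inr r) * y r)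
        \<le> duality_rhs b c i" if "i \<in> I" for i
      using z that fin by (simp add: V_def x_def y_def sum_Inl_Inr)
    have x: "lp_primal_feasible X R A b x"
      unfolding lp_primal_feasible_def
    proof (intro conjI ballI)
      fix j assume "j \<in> X"
      with row[of "Primal_Sign j"] fin show "0 \<le> x j" by (simp add: I_def sum_negf)
    next
      fix r assume "r \<in> R"
      with row[of "Primal_Row r"] fin show "b r \<le> (\<Sum>j\<in>X. A r j * x j)" by (simp add: I_def sum_negf)
    qed
    have y: "lp_dual_feasible X R A c y"
      unfolding lp_dual_feasible_def
    proof (intro conjI ballI)
      fix r assume "r \<in> R"
      with row[of "Dual_Sign r"] fin show "0 \<le> y r" by (simp add: I_def sum_negf)
    next
      fix j assume "j \<in> X"
      with row[of "Dual_Row j"] fin show "(\<Sum>r\<in>R. y r * A r j) \<le> c j"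
        by (simp add: I_def mult.commute)
    qed
    have "(\<Sum>j\<in>X. c j * x j) \<le> (\<Sum>r\<in>R. b r * y r)"
      using row[of Gap] by (simp add: I_def sum_negf)
    with lp_weak_duality[OF fin x y] x y show ?thesis by (intro exI conjI) auto
  next
    fix z assume z: "\<forall>i\<in>I. 0 \<le> z i" "\<forall>u\<in>V. (\<Sum>i\<in>I. z i * duality_coeff A b c i u) = 0"
      "(\<Sum>i\<in>I. z i * duality_rhs b c i) < 0"
    define p where "p r = z (Primal_Row r)" for r
    define q where "q j = z (Dual_Row j)" for j
    define \<tau> where "\<tau> = z Gap"
    have col_x: "- (\<Sum>r\<in>R. p r * A r j) - z (Primal_Sign j) + \<tau> * c j = 0" if "j \<in> X" for j
      using z(2)[rule_format, of "Inl j", unfolded I_def sum_duality_rows[OF fin]] that fin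
      by (simp add: V_def p_def \<tau>_def sum_negf)
    have col_y: "- z (Dual_Sign r) + (\<Sum>j\<in>X. A r j * q j) - \<tau> * b r = 0" if "r \<in> R" for r
      using z(2)[rule_format, of "Inr r", unfolded I_def sum_duality_rows[OF fin]] that fin
      by (simp add: V_def q_def \<tau>_def sum_negf mult.commute)
    have p: "lp_dual_feasible X R A (\<lambda>j. \<tau> * c j) p"
      unfolding lp_dual_feasible_def
    proof (intro conjI ballI)
      fix r assume "r \<in> R"
      then show "0 \<le> p r" using z(1) by (simp add: I_def p_def)
    next
      fix j assume j: "j \<in> X"
      have "0 \<le> z (Primal_Sign j)" using z(1) j by (simp add: I_def)
      with col_x[OF j] show "(\<Sum>r\<in>R. p r * A r j) \<le> \<tau> * c j" by linarith
    qed
    have q: "lp_primal_feasible X R A (\<lambda>r. \<tau> * b r) q"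
      unfolding lp_primal_feasible_def
    proof (intro conjI ballI)
      fix j assume "j \<in> X"
      then show "0 \<le> q j" using z(1) by (simp add: I_def q_def)
    next
      fix r assume r: "r \<in> R"
      have "0 \<le> z (Dual_Sign r)" using z(1) r by (simp add: I_def)
      with col_y[OF r] show "\<tau> * b r \<le> (\<Sum>j\<in>X. A r j * q j)" by linarith
    qed
    have gap: "(\<Sum>j\<in>X. c j * q j) < (\<Sum>r\<in>R. b r * p r)"
      using z(3)[unfolded I_def sum_duality_rows[OF fin]]
      by (simp add: p_def q_def sum_negf mult.commute)
    have "0 \<le> \<tau>" using z(1) by (simp add: I_def \<tau>_def)
    then consider "0 < \<tau>" | "\<tau> = 0" by linarith
    then show ?thesis
    proof cases
      case 1
      have "\<tau> * (\<Sum>r\<in>R. b r * p r) \<le> \<tau> * (\<Sum>j\<in>X. c j * q j)"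
        using lp_weak_duality[OF fin q p] by (simp add: sum_distrib_left mult.assoc)
      with 1 gap show ?thesis by simp
    next
      case 2
      \<comment> \<open>then \<open>p\<close> and \<open>q\<close> are rays of the dual and primal feasible regions\<close>
      have "(\<Sum>r\<in>R. b r * p r) \<le> 0"
        using lp_weak_duality[OF fin assms(3), of "\<lambda>_. 0" p] p 2 by simp
      moreover have "0 \<le> (\<Sum>j\<in>X. c j * q j)"
        using lp_weak_duality[OF fin _ assms(4), of "\<lambda>_. 0" q] q 2 by simp
      ultimately show ?thesis using gap by simp
    qed
  qed
qed

lemma lp_dual_feasible_iff_primal:
  "lp_dual_feasible X R A c y \<longleftrightarrow> lp_primal_feasible R X (\<lambda>j r. - A r j) (\<lambda>j. - c j) y"
  by (simp add: lp_dual_feasible_def lp_primal_feasible_def sum_negf mult.commute)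

definition lp_lexicographic_dual_optimal ::
    "'x set \<Rightarrow> 'r set \<Rightarrow> ('r \<Rightarrow> 'x \<Rightarrow> real) \<Rightarrow> ('r \<Rightarrow> real) \<Rightarrow> ('x \<Rightarrow> real) \<Rightarrow> ('r \<Rightarrow> real)
      \<Rightarrow> ('r \<Rightarrow> real) \<Rightarrow> bool" where
  "lp_lexicographic_dual_optimal X R A b c d y \<longleftrightarrow> lp_dual_feasible X R A c y \<and>
     (\<forall>y'. lp_dual_feasible X R A c y' \<longrightarrow> (\<Sum>r\<in>R. b r * y' r) \<le> (\<Sum>r\<in>R. b r * y r) \<and>
        ((\<Sum>r\<in>R. b r * y' r) = (\<Sum>r\<in>R. b r * y r) \<longrightarrow> (\<Sum>r\<in>R. d r * y r) \<le> (\<Sum>r\<in>R. d r * y' r)))"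

text \<open>A lexicographic optimum is an optimal solution of the LP that adds \<open>b \<bullet> y \<ge> opt\<close> to the
  dual constraints and minimises \<open>d \<bullet> y\<close>, which is bounded below since \<open>d \<ge> 0\<close>.\<close>

theorem lp_lexicographic_dual_optimum:
  assumes fin: "finite X" "finite R"
    and "lp_primal_feasible X R A b x0" "lp_dual_feasible X R A c y0" and d: "\<forall>r\<in>R. 0 \<le> d r"
  shows "\<exists>x y. lp_primal_feasible X R A b x \<and> lp_lexicographic_dual_optimal X R A b c d y
           \<and> (\<Sum>j\<in>X. c j * x j) = (\<Sum>r\<in>R. b r * y r)"
proof -
  obtain x y where x: "lp_primal_feasible X R A b x" and y: "lp_dual_feasible X R A c y"
    and opt: "(\<Sum>j\<in>X. c j * x j) = (\<Sum>r\<in>R. b r * y r)"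
    using lp_strong_duality[OF assms(1-4)] by blast
  define X' where "X' = insert None (Some ` X)"
  define A' where "A' i r = (case i of Some j \<Rightarrow> - A r j | None \<Rightarrow> b r)" for i r
  define b' where "b' i = (case i of Some j \<Rightarrow> - c j | None \<Rightarrow> (\<Sum>r\<in>R. b r * y r))" for i
  have fin': "finite X'" using fin by (simp add: X'_def)
  have secondary: "lp_primal_feasible R X' A' b' z \<longleftrightarrow>
      lp_dual_feasible X R A c z \<and> (\<Sum>r\<in>R. b r * y r) \<le> (\<Sum>r\<in>R. b r * z r)" for z
    by (auto simp: lp_dual_feasible_iff_primal lp_primal_feasible_def X'_def A'_def b'_def)
  have "lp_primal_feasible R X' A' b' y" using y secondary by simp
  moreover have "lp_dual_feasible R X' A' d (\<lambda>_. 0)" using d by (simp add: lp_dual_feasible_def)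
  ultimately obtain z w
    where z: "lp_primal_feasible R X' A' b' z" and w: "lp_dual_feasible R X' A' d w"
    and z_opt: "(\<Sum>r\<in>R. d r * z r) = (\<Sum>i\<in>X'. b' i * w i)"
    using lp_strong_duality[OF fin(2) fin'] by blast
  have z_dual: "lp_dual_feasible X R A c z" and z_ge: "(\<Sum>r\<in>R. b r * y r) \<le> (\<Sum>r\<in>R. b r * z r)"
    using z secondary by auto
  have "(\<Sum>j\<in>X. c j * x j) = (\<Sum>r\<in>R. b r * z r)"
    using lp_weak_duality[OF fin x z_dual] z_ge opt by simp
  moreover have "(\<Sum>r\<in>R. b r * y' r) \<le> (\<Sum>j\<in>X. c j * x j)" if "lp_dual_feasible X R A c y'" for y'
    using lp_weak_duality[OF fin x that] .
  moreover have "(\<Sum>r\<in>R. d r * z r) \<le> (\<Sum>r\<in>R. d r * y' r)"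
    if "lp_dual_feasible X R A c y'" "(\<Sum>r\<in>R. b r * y' r) = (\<Sum>r\<in>R. b r * z r)" for y'
  proof -
    have "lp_primal_feasible R X' A' b' y'" using that z_ge secondary by simp
    from lp_weak_duality[OF fin(2) fin' this w] z_opt show ?thesis by (simp add: mult.commute)
  qed
  ultimately show ?thesis using x z_dual by (auto simp: lp_lexicographic_dual_optimal_def)
qed

text \<open>If row \<open>r\<^sub>3\<close> is the sum of rows \<open>r\<^sub>1\<close> and \<open>r\<^sub>2\<close> but cheaper for the secondary cost,
  shifting weight from \<open>r\<^sub>1\<close> and \<open>r\<^sub>2\<close> onto \<open>r\<^sub>3\<close> would improve a lexicographically optimal
  dual solution unless one of the two weights vanishes.\<close>

lemma lp_lexicographic_dual_exchange:
  assumes "finite R" and rows: "r1 \<in> R" "r2 \<in> R" "r3 \<in> R" "r1 \<noteq> r2" "r1 \<noteq> r3" "r2 \<noteq> r3"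
    and A: "\<forall>j\<in>X. A r3 j = A r1 j + A r2 j" and b: "b r3 = b r1 + b r2" and d: "d r3 < d r1 + d r2"
    and y: "lp_lexicographic_dual_optimal X R A b c d y"
  shows "y r1 = 0 \<or> y r2 = 0"
proof (rule ccontr)
  define \<epsilon> where "\<epsilon> = min (y r1) (y r2)"
  assume "\<not> ?thesis"
  moreover have y_dual: "lp_dual_feasible X R A c y"
    using y by (simp add: lp_lexicographic_dual_optimal_def)
  then have "0 \<le> y r1" "0 \<le> y r2" using rows by (auto simp: lp_dual_feasible_def)
  ultimately have \<epsilon>: "0 < \<epsilon>" by (simp add: \<epsilon>_def)
  define y' where "y' r = y r + \<epsilon> * (of_bool (r = r3) - of_bool (r = r1) - of_bool (r = r2))" for r
  have shift: "(\<Sum>r\<in>R. y' r * f r) = (\<Sum>r\<in>R. y r * f r) + \<epsilon> * (f r3 - f r1 - f r2)" for f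
  proof -
    have "(\<Sum>r\<in>R. y' r * f r) = (\<Sum>r\<in>R. y r * f r)
        + \<epsilon> * ((\<Sum>r\<in>R. of_bool (r = r3) * f r) - (\<Sum>r\<in>R. of_bool (r = r1) * f r)
                - (\<Sum>r\<in>R. of_bool (r = r2) * f r))"
      unfolding y'_def by (simp add: algebra_simps sum.distrib sum_subtractf sum_distrib_left)
    then show ?thesis using assms(1) rows by simp
  qed
  have "0 \<le> y' r" if "r \<in> R" for r
    using y_dual that rows \<epsilon> by (auto simp: lp_dual_feasible_def y'_def \<epsilon>_def)
  moreover have "(\<Sum>r\<in>R. y' r * A r j) \<le> c j" if "j \<in> X" for j
    using y_dual that A shift[of "\<lambda>r. A r j"] by (simp add: lp_dual_feasible_def)
  ultimately have "lp_dual_feasible X R A c y'" by (simp add: lp_dual_feasible_def)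
  moreover have "(\<Sum>r\<in>R. b r * y' r) = (\<Sum>r\<in>R. b r * y r)"
    using shift[of b] b by (simp add: mult.commute)
  moreover have "\<epsilon> * (d r3 - d r1 - d r2) < 0" using \<epsilon> d by (simp add: mult_pos_neg)
  then have "(\<Sum>r\<in>R. d r * y' r) < (\<Sum>r\<in>R. d r * y r)"
    using shift[of d] by (simp add: mult.commute)
  ultimately show False using y by (force simp: lp_lexicographic_dual_optimal_def)
qed

section \<open>The inner problem for a fixed binary \<open>v\<close>\<close>

type_synonym row = "triple \<times> nat + nat set"

text \<open>The inner problem for fixed \<open>v\<close> as an LP \<open>min \<beta> \<bullet> y\<close> subject to \<open>y \<ge> 0\<close> and rows of the
  form \<open>row_coeff r \<bullet> y \<ge> row_rhs r\<close>: row \<open>Inl (t, j)\<close> is the \<open>j\<close>-th inequality of triple \<open>t\<close>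
  (only needed when \<open>v t = 1\<close>; otherwise it follows from the box), row \<open>Inr J\<close> is \<open>y\<^sub>J \<le> 1\<close>.
  The dual weight of row \<open>Inl (t, j)\<close> is \<open>\<lambda>\<^sub>t\<^sub>,\<^sub>j\<close> and that of row \<open>Inr J\<close> is \<open>\<mu>\<^sub>J\<close>.\<close>

fun row_coeff :: "row \<Rightarrow> nat set \<Rightarrow> real" where
  "row_coeff (Inl (t, j)) J =
     (if j = 1 then of_bool (tail1 t = J) - of_bool (head t = J)
      else if j = 2 then of_bool (tail2 t = J) - of_bool (head t = J)
      else of_bool (head t = J) - of_bool (tail1 t = J) - of_bool (tail2 t = J))"
| "row_coeff (Inr J') J = - of_bool (J' = J)"

fun row_rhs :: "row \<Rightarrow> real" where
  "row_rhs (Inl (t, j)) = (if j = 3 then -1 else 0)"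
| "row_rhs (Inr J) = -1"

fun outflow_cost :: "row \<Rightarrow> real" where
  "outflow_cost (Inl (t, j)) = (if j = 3 then 0 else 1)"
| "outflow_cost (Inr J) = 0"

declare row_coeff.simps [simp del]

locale fixed_binary_v =
  fixes m :: nat and \<alpha> :: "nat \<Rightarrow> real" and Js :: "nat \<Rightarrow> nat set" and v :: "triple \<Rightarrow> real"
  assumes Js_nonempty: "\<And>i. i \<in> {1..m} \<Longrightarrow> Js i \<noteq> {}"
    and Js_finite: "\<And>i. i \<in> {1..m} \<Longrightarrow> finite (Js i)"
    and v_binary: "\<And>t. t \<in> Trip m Js \<Longrightarrow> v t = 0 \<or> v t = 1"
begin

abbreviation "\<N> \<equiv> Nd m Js"
abbreviation "\<T> \<equiv> Trip m Js"
abbreviation "\<beta> \<equiv> beta m \<alpha> Js"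
abbreviation "\<eta> \<equiv> eta m \<alpha>"

definition active :: "triple set" where
  "active = {t \<in> \<T>. v t = 1}"

definition rows :: "row set" where
  "rows = Inl ` (active \<times> {1, 2, 3}) \<union> Inr ` \<N>"

lemma Nd_iff: "J \<in> \<N> \<longleftrightarrow> J \<noteq> {} \<and> (\<exists>i\<in>{1..m}. J \<subseteq> Js i)"
  by (auto simp: Nd_def Ni_def)

lemma finite_Nd: "finite \<N>"
proof (rule finite_subset)
  show "\<N> \<subseteq> Pow (\<Union>i\<in>{1..m}. Js i)" by (force simp: Nd_iff)
qed (simp add: Js_finite)

lemma finite_Nd_member: "J \<in> \<N> \<Longrightarrow> finite J"
  using Js_finite by (auto simp: Nd_iff intro: finite_subset)

lemma Js_in_Nd: "i \<in> {1..m} \<Longrightarrow> Js i \<in> \<N>"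
  using Js_nonempty by (auto simp: Nd_iff)

lemma
  assumes "t \<in> \<T>"
  shows Trip_in_Nd: "head t \<in> \<N>" "tail1 t \<in> \<N>" "tail2 t \<in> \<N>"
    and Trip_card: "card (tail1 t) < card (head t)" "card (tail2 t) < card (head t)"
      "2 \<le> card (head t)"
    and Trip_tails_distinct: "tail1 t \<noteq> tail2 t"
proof -
  obtain J J' J'' where t: "t = (J, J', J'')" by (cases t)
  have J'': "J'' \<in> \<N>" "2 \<le> card J''" and J: "J \<noteq> {}" "J' \<noteq> {}" "J \<inter> J' = {}" "J \<union> J' = J''"
    using assms by (auto simp: Trip_def t)
  show "head t \<in> \<N>" "2 \<le> card (head t)" using J'' by (simp_all add: t head_def)
  show "tail1 t \<in> \<N>" "tail2 t \<in> \<N>" using J'' J by (auto simp: t tail1_def tail2_def Nd_iff)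
  show "tail1 t \<noteq> tail2 t" using J by (auto simp: t tail1_def tail2_def)
  have "finite J''" using finite_Nd_member[OF J''(1)] .
  moreover have "J \<subset> J''" "J' \<subset> J''" using J by auto
  ultimately show "card (tail1 t) < card (head t)" "card (tail2 t) < card (head t)"
    by (simp_all add: t tail1_def tail2_def head_def psubset_card_mono)
qed

lemma finite_Trip: "finite \<T>"
proof (rule finite_subset)
  show "\<T> \<subseteq> \<N> \<times> \<N> \<times> \<N>"
    using Trip_in_Nd by (force simp: tail1_def tail2_def head_def)
qed (simp add: finite_Nd)

lemma
  assumes "t \<in> active"
  shows active_Trip: "t \<in> \<T>" and active_v: "v t = 1"
  using assms by (simp_all add: active_def)

lemma finite_rows: "finite rows"
  using finite_Trip finite_Nd by (simp add: rows_def active_def)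

lemma sum_rows:
  "(\<Sum>r\<in>rows. f r) =
     (\<Sum>t\<in>active. f (Inl (t, 1)) + f (Inl (t, 2)) + f (Inl (t, 3))) + (\<Sum>J\<in>\<N>. f (Inr J))"
proof -
  have "finite active" using finite_Trip by (simp add: active_def)
  then show ?thesis
    unfolding rows_def using finite_Nd by (simp add: sum_Inl_Inr sum.cartesian_product' add.assoc)
qed

lemma ball_rows:
  "(\<forall>r\<in>rows. P r) \<longleftrightarrow>
     (\<forall>t\<in>active. P (Inl (t, 1)) \<and> P (Inl (t, 2)) \<and> P (Inl (t, 3))) \<and> (\<forall>J\<in>\<N>. P (Inr J))"
  by (auto simp: rows_def)

lemma row_coeff_sum:
  assumes "t \<in> \<T>"
  shows "(\<Sum>J\<in>\<N>. row_coeff (Inl (t, j)) J * y J) =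
    (if j = 1 then y (tail1 t) - y (head t) else if j = 2 then y (tail2 t) - y (head t)
     else y (head t) - y (tail1 t) - y (tail2 t))"
  using Trip_in_Nd[OF assms] finite_Nd
  by (simp add: row_coeff.simps left_diff_distrib sum_subtractf)

lemma row_coeff_Inr_sum: "J \<in> \<N> \<Longrightarrow> (\<Sum>J'\<in>\<N>. row_coeff (Inr J) J' * y J') = - y J"
  using finite_Nd by (simp add: row_coeff.simps sum_negf)

lemma primal_feasible_iff_inner_feas:
  "lp_primal_feasible \<N> rows row_coeff row_rhs y \<longleftrightarrow> inner_feas m Js v y"
proof -
  let ?box = "\<forall>J\<in>\<N>. 0 \<le> y J \<and> y J \<le> 1"
  let ?triple = "\<lambda>t. y (head t) - y (tail1 t) \<le> 1 - v t \<and> y (head t) - y (tail2 t) \<le> 1 - v t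
    \<and> y (tail1 t) + y (tail2 t) - y (head t) \<le> 2 - v t"
  have "lp_primal_feasible \<N> rows row_coeff row_rhs y \<longleftrightarrow> ?box \<and> (\<forall>t\<in>active. ?triple t)"
    by (auto simp: lp_primal_feasible_def ball_rows row_coeff_sum row_coeff_Inr_sum
        active_Trip active_v)
  also have "\<dots> \<longleftrightarrow> ?box \<and> (\<forall>t\<in>\<T>. ?triple t)"
  proof (intro conj_cong refl iffI ballI)
    fix t assume box: ?box and active: "\<forall>t\<in>active. ?triple t" and t: "t \<in> \<T>"
    show "?triple t"
    proof (cases "v t = 1")
      case True
      then have "t \<in> active" using t by (simp add: active_def)
      then show ?thesis using active by blast
    next
      case False
      then have "v t = 0" using v_binary t by blast
      moreover have "0 \<le> y (head t)" "y (head t) \<le> 1" "0 \<le> y (tail1 t)" "y (tail1 t) \<le> 1"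
        "0 \<le> y (tail2 t)" "y (tail2 t) \<le> 1"
        using box Trip_in_Nd[OF t] by auto
      ultimately show ?thesis by (intro conjI) linarith+
    qed
  qed (use active_Trip in blast)
  finally show ?thesis by (simp add: inner_feas_def)
qed

lemma primal_objective: "(\<Sum>J\<in>\<N>. \<beta> J * y J) = inner_obj m \<alpha> Js y"
proof -
  have "(\<Sum>J\<in>\<N>. \<beta> J * y J) = (\<Sum>J\<in>\<N>. \<Sum>i | i \<in> {1..m} \<and> Js i = J. \<alpha> i * y (Js i))"
    unfolding beta_def sum_distrib_right by (intro sum.cong) auto
  also have "\<dots> = inner_obj m \<alpha> Js y"
    unfolding inner_obj_def using finite_Nd Js_in_Nd by (intro sum.group) auto
  finally show ?thesis .
qed

lemma inner_obj_lower_bound: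
  assumes "inner_feas m Js v y"
  shows "- \<eta> \<le> inner_obj m \<alpha> Js y"
proof -
  have "min 0 (\<alpha> i) \<le> \<alpha> i * y (Js i)" if "i \<in> {1..m}" for i
  proof -
    have "0 \<le> y (Js i)" "y (Js i) \<le> 1" using assms Js_in_Nd[OF that] by (auto simp: inner_feas_def)
    then show ?thesis by (cases "0 \<le> \<alpha> i") (auto intro: mult_left_mono_neg[of _ 1, simplified])
  qed
  then have "(\<Sum>i\<in>{1..m}. min 0 (\<alpha> i)) \<le> (\<Sum>i\<in>{1..m}. \<alpha> i * y (Js i))" by (rule sum_mono)
  then show ?thesis by (simp add: eta_def inner_obj_def)
qed

definition lam_of :: "(row \<Rightarrow> real) \<Rightarrow> triple \<Rightarrow> nat \<Rightarrow> real" where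
  "lam_of z t j = (if t \<in> active then z (Inl (t, j)) else 0)"

definition mip_slack :: "(triple \<Rightarrow> nat \<Rightarrow> real) \<Rightarrow> (nat set \<Rightarrow> real) \<Rightarrow> nat set \<Rightarrow> real" where
  "mip_slack lam mu J = \<beta> J
        + (\<Sum>t | t \<in> \<T> \<and> tail1 t = J. - lam t 1 + lam t 3)
        + (\<Sum>t | t \<in> \<T> \<and> tail2 t = J. - lam t 2 + lam t 3)
        + (\<Sum>t | t \<in> \<T> \<and> head t = J. lam t 1 + lam t 2 - lam t 3)
        + mu J"

lemma mip_feas_iff:
  "mip_feas m \<alpha> Js v lam mu \<longleftrightarrow>
     (\<forall>t\<in>\<T>. \<forall>j\<in>{1, 2, 3}. 0 \<le> lam t j \<and> lam t j \<le> Mc m \<alpha> Js t j * v t) \<and>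
     (\<forall>J\<in>\<N>. 0 \<le> mu J) \<and> (\<forall>J\<in>\<N>. 0 \<le> mip_slack lam mu J)"
  by (simp add: mip_feas_def mip_slack_def)

lemma mip_slack_cong:
  assumes "\<forall>t\<in>\<T>. \<forall>j\<in>{1, 2, 3}. lam t j = lam' t j"
  shows "mip_slack lam mu J = mip_slack lam' mu J"
  using assms by (simp add: mip_slack_def)

lemma mip_obj_cong:
  assumes "\<forall>t\<in>\<T>. lam t 3 = lam' t 3"
  shows "mip_obj m Js lam mu = mip_obj m Js lam' mu"
  using assms by (simp add: mip_obj_def)

lemma mip_slack_eq_sum:
  "mip_slack lam mu J = \<beta> J + (\<Sum>t\<in>\<T>.
       (if tail1 t = J then - lam t 1 + lam t 3 else 0)
     + (if tail2 t = J then - lam t 2 + lam t 3 else 0)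
     + (if head t = J then lam t 1 + lam t 2 - lam t 3 else 0)) + mu J"
  unfolding mip_slack_def sum.inter_filter[OF finite_Trip] by (simp only: sum.distrib add.assoc)

lemma dual_column_sum:
  assumes "J \<in> \<N>"
  shows "(\<Sum>r\<in>rows. z r * row_coeff r J) = \<beta> J - mip_slack (lam_of z) (z \<circ> Inr) J"
proof -
  define g where "g t =
       (if tail1 t = J then - lam_of z t 1 + lam_of z t 3 else 0)
     + (if tail2 t = J then - lam_of z t 2 + lam_of z t 3 else 0)
     + (if head t = J then lam_of z t 1 + lam_of z t 2 - lam_of z t 3 else 0)" for t
  let ?f = "\<lambda>r. z r * row_coeff r J"
  have "?f (Inl (t, 1)) + ?f (Inl (t, 2)) + ?f (Inl (t, 3)) = - g t" if "t \<in> active" for t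
    using that
    by (cases "tail1 t = J"; cases "tail2 t = J"; cases "head t = J")
      (simp_all add: g_def lam_of_def row_coeff.simps)
  then have "(\<Sum>t\<in>active. ?f (Inl (t, 1)) + ?f (Inl (t, 2)) + ?f (Inl (t, 3))) = (\<Sum>t\<in>\<T>. - g t)"
    using finite_Trip by (intro sum.mono_neutral_cong_left) (auto simp: active_def g_def lam_of_def)
  moreover have "(\<Sum>J'\<in>\<N>. z (Inr J') * row_coeff (Inr J') J) = - z (Inr J)"
    using assms finite_Nd by (simp add: row_coeff.simps sum_negf)
  ultimately show ?thesis
    unfolding sum_rows mip_slack_eq_sum g_def[symmetric] by (simp add: sum_negf)
qed

lemma dual_objective: "(\<Sum>r\<in>rows. row_rhs r * z r) = mip_obj m Js (lam_of z) (z \<circ> Inr)"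
proof -
  have "(\<Sum>t\<in>active. z (Inl (t, 3))) = (\<Sum>t\<in>\<T>. lam_of z t 3)"
    using finite_Trip by (intro sum.mono_neutral_cong_left) (auto simp: active_def lam_of_def)
  then show ?thesis unfolding sum_rows by (simp add: mip_obj_def sum_negf)
qed

lemma primal_feasible_zero: "lp_primal_feasible \<N> rows row_coeff row_rhs (\<lambda>_. 0)"
proof -
  have "inner_feas m Js v (\<lambda>_. 0)" using v_binary by (fastforce simp: inner_feas_def)
  then show ?thesis by (simp add: primal_feasible_iff_inner_feas)
qed

lemma dual_feasible_mu_only:
  "lp_dual_feasible \<N> rows row_coeff \<beta> (case_sum (\<lambda>_. 0) (\<lambda>J. max 0 (- \<beta> J)))"
proof -
  define z :: "row \<Rightarrow> real" where "z = case_sum (\<lambda>_. 0) (\<lambda>J. max 0 (- \<beta> J))"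
  have "lam_of z = (\<lambda>_ _. 0)" by (simp add: z_def lam_of_def fun_eq_iff)
  moreover have "z (Inl p) = 0" "z (Inr J) = max 0 (- \<beta> J)" for p J by (simp_all add: z_def)
  ultimately have "lp_dual_feasible \<N> rows row_coeff \<beta> z"
    unfolding lp_dual_feasible_def ball_rows by (simp add: dual_column_sum mip_slack_def max_def)
  then show ?thesis by (simp add: z_def)
qed

lemma mip_weak_duality:
  assumes mip: "mip_feas m \<alpha> Js v lam mu" and y: "inner_feas m Js v y"
  shows "mip_obj m Js lam mu \<le> inner_obj m \<alpha> Js y"
proof -
  define z where "z = case_sum (case_prod lam) mu"
  have lam: "\<forall>t\<in>\<T>. \<forall>j\<in>{1, 2, 3}. lam_of z t j = lam t j"
  proof (intro ballI)
    fix t j assume t: "t \<in> \<T>" and j: "j \<in> {1, 2, 3 :: nat}"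
    show "lam_of z t j = lam t j"
    proof (cases "t \<in> active")
      case False
      then have "v t = 0" using v_binary[OF t] t by (auto simp: active_def)
      then show ?thesis using mip t j False by (force simp: mip_feas_iff lam_of_def)
    qed (simp add: lam_of_def z_def)
  qed
  have "z \<circ> Inr = mu" by (simp add: z_def fun_eq_iff)
  then have slack: "mip_slack (lam_of z) (z \<circ> Inr) J = mip_slack lam mu J" for J
    using lam by (simp add: mip_slack_cong)
  have "\<forall>r\<in>rows. 0 \<le> z r"
    using mip unfolding ball_rows by (auto simp: mip_feas_iff z_def active_def)
  moreover have "\<forall>J\<in>\<N>. (\<Sum>r\<in>rows. z r * row_coeff r J) \<le> \<beta> J"
    using mip by (simp add: mip_feas_iff dual_column_sum slack)
  ultimately have "lp_dual_feasible \<N> rows row_coeff \<beta> z" by (simp add: lp_dual_feasible_def)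
  from lp_weak_duality[OF finite_Nd finite_rows _ this] y
  have "(\<Sum>r\<in>rows. row_rhs r * z r) \<le> inner_obj m \<alpha> Js y"
    by (simp add: primal_feasible_iff_inner_feas primal_objective)
  moreover have "(\<Sum>r\<in>rows. row_rhs r * z r) = mip_obj m Js lam mu"
    using lam \<open>z \<circ> Inr = mu\<close> by (simp add: dual_objective mip_obj_cong)
  ultimately show ?thesis by simp
qed

definition outflow :: "(triple \<Rightarrow> nat \<Rightarrow> real) \<Rightarrow> nat set \<Rightarrow> real" where
  "outflow lam J = (\<Sum>t | t \<in> \<T> \<and> tail1 t = J. lam t 1) + (\<Sum>t | t \<in> \<T> \<and> tail2 t = J. lam t 2)"

definition inflow :: "(triple \<Rightarrow> nat \<Rightarrow> real) \<Rightarrow> nat set \<Rightarrow> real" where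
  "inflow lam J = (\<Sum>t | t \<in> \<T> \<and> head t = J. lam t 1 + lam t 2)"

lemma finite_Trip_filter: "finite {t. t \<in> \<T> \<and> P t}"
  using finite_Trip by simp

lemma lam_le_outflow:
  assumes nonneg: "\<forall>t\<in>\<T>. 0 \<le> lam t 1 \<and> 0 \<le> lam t 2" and t: "t \<in> \<T>"
  shows "lam t 1 \<le> outflow lam (tail1 t)" "lam t 2 \<le> outflow lam (tail2 t)"
proof -
  have "lam t 1 \<le> (\<Sum>t' | t' \<in> \<T> \<and> tail1 t' = tail1 t. lam t' 1)"
    using t nonneg by (intro member_le_sum finite_Trip_filter) auto
  moreover have "0 \<le> (\<Sum>t' | t' \<in> \<T> \<and> tail2 t' = tail1 t. lam t' 2)"
    using nonneg by (intro sum_nonneg) auto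
  ultimately show "lam t 1 \<le> outflow lam (tail1 t)" by (simp add: outflow_def)
  have "lam t 2 \<le> (\<Sum>t' | t' \<in> \<T> \<and> tail2 t' = tail2 t. lam t' 2)"
    using t nonneg by (intro member_le_sum finite_Trip_filter) auto
  moreover have "0 \<le> (\<Sum>t' | t' \<in> \<T> \<and> tail1 t' = tail2 t. lam t' 1)"
    using nonneg by (intro sum_nonneg) auto
  ultimately show "lam t 2 \<le> outflow lam (tail2 t)" by (simp add: outflow_def)
qed

lemma outflow_le_Raux:
  assumes nonneg: "\<forall>t\<in>\<T>. 0 \<le> lam t 1 \<and> 0 \<le> lam t 2"
    and rec: "\<forall>J\<in>\<N>. outflow lam J \<le> max 0 (\<beta> J + \<eta> + inflow lam J)"
  shows "J \<in> \<N> \<Longrightarrow> card J \<le> Suc d \<Longrightarrow> outflow lam J \<le> Raux m \<alpha> Js d J"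
proof (induction d arbitrary: J)
  case 0
  then have "{t. t \<in> \<T> \<and> head t = J} = {}" using Trip_card(3) by fastforce
  then have "inflow lam J = 0" unfolding inflow_def by (simp only: sum.empty)
  moreover have "outflow lam J \<le> max 0 (\<beta> J + \<eta> + inflow lam J)" using rec 0 by blast
  ultimately show ?case by simp
next
  case (Suc d)
  have "inflow lam J \<le> (\<Sum>t | t \<in> \<T> \<and> head t = J. Raux m \<alpha> Js d (tail1 t) + Raux m \<alpha> Js d (tail2 t))"
    unfolding inflow_def
  proof (intro sum_mono add_mono)
    fix t assume "t \<in> {t. t \<in> \<T> \<and> head t = J}"
    then have t: "t \<in> \<T>" and "card (tail1 t) \<le> Suc d" "card (tail2 t) \<le> Suc d"
      using Trip_card(1,2)[of t] Suc.prems(2) by auto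
    then have "outflow lam (tail1 t) \<le> Raux m \<alpha> Js d (tail1 t)"
      "outflow lam (tail2 t) \<le> Raux m \<alpha> Js d (tail2 t)"
      using Suc.IH Trip_in_Nd[OF t] by blast+
    then show "lam t 1 \<le> Raux m \<alpha> Js d (tail1 t)" "lam t 2 \<le> Raux m \<alpha> Js d (tail2 t)"
      using lam_le_outflow[OF nonneg t] by linarith+
  qed
  moreover have "outflow lam J \<le> max 0 (\<beta> J + \<eta> + inflow lam J)" using rec Suc.prems(1) by blast
  ultimately show ?case by simp
qed

lemma lam_le_Rc:
  assumes nonneg: "\<forall>t\<in>\<T>. 0 \<le> lam t 1 \<and> 0 \<le> lam t 2"
    and rec: "\<forall>J\<in>\<N>. outflow lam J \<le> max 0 (\<beta> J + \<eta> + inflow lam J)"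
    and t: "t \<in> \<T>"
  shows "lam t 1 \<le> Rc m \<alpha> Js (tail1 t)" "lam t 2 \<le> Rc m \<alpha> Js (tail2 t)"
  using lam_le_outflow[OF nonneg t] Trip_in_Nd[OF t]
    outflow_le_Raux[OF nonneg rec, of "tail1 t" "card (tail1 t)"]
    outflow_le_Raux[OF nonneg rec, of "tail2 t" "card (tail2 t)"]
  by (simp_all add: Rc_def)

lemma outflow_le_from_slack:
  assumes nonneg: "\<forall>t\<in>\<T>. \<forall>j\<in>{1, 2, 3}. 0 \<le> lam t j"
    and slack: "0 \<le> mip_slack lam mu J" and lam3: "(\<Sum>t\<in>\<T>. lam t 3) \<le> \<eta>"
    and compl: "mu J = 0 \<or> outflow lam J = 0"
  shows "outflow lam J \<le> max 0 (\<beta> J + \<eta> + inflow lam J)"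
proof (cases "mu J = 0")
  case True
  define T1 where "T1 = {t. t \<in> \<T> \<and> tail1 t = J}"
  define T2 where "T2 = {t. t \<in> \<T> \<and> tail2 t = J}"
  define H where "H = {t. t \<in> \<T> \<and> head t = J}"
  have "T1 \<inter> T2 = {}" using Trip_tails_distinct by (auto simp: T1_def T2_def)
  then have "(\<Sum>t\<in>T1. lam t 3) + (\<Sum>t\<in>T2. lam t 3) = (\<Sum>t\<in>T1 \<union> T2. lam t 3)"
    unfolding T1_def T2_def by (simp add: sum.union_disjoint finite_Trip_filter)
  also have "\<dots> \<le> (\<Sum>t\<in>\<T>. lam t 3)"
    using nonneg finite_Trip by (intro sum_mono2) (auto simp: T1_def T2_def)
  finally have tails: "(\<Sum>t\<in>T1. lam t 3) + (\<Sum>t\<in>T2. lam t 3) \<le> \<eta>" using lam3 by linarith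
  have head: "0 \<le> (\<Sum>t\<in>H. lam t 3)" using nonneg by (intro sum_nonneg) (auto simp: H_def)
  have "0 \<le> \<beta> J - (\<Sum>t\<in>T1. lam t 1) + (\<Sum>t\<in>T1. lam t 3) - (\<Sum>t\<in>T2. lam t 2) + (\<Sum>t\<in>T2. lam t 3)
      + (\<Sum>t\<in>H. lam t 1 + lam t 2) - (\<Sum>t\<in>H. lam t 3)"
    using slack True unfolding mip_slack_def T1_def[symmetric] T2_def[symmetric] H_def[symmetric]
    by (simp add: sum.distrib sum_subtractf sum_negf)
  then show ?thesis
    using tails head
    unfolding outflow_def inflow_def T1_def[symmetric] T2_def[symmetric] H_def[symmetric]
    by linarith
qed (use compl in simp)

lemma lexicographic_dual_tail_exchange:
  assumes z: "lp_lexicographic_dual_optimal \<N> rows row_coeff row_rhs \<beta> outflow_cost z"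
    and t: "t \<in> active" and tail: "(j, J) \<in> {(1, tail1 t), (2, tail2 t)}"
  shows "z (Inl (t, j)) = 0 \<or> z (Inr J) = 0"
proof -
  have t': "t \<in> \<T>" using active_Trip[OF t] .
  have J: "J \<in> \<N>" "J \<noteq> head t" and j: "j \<in> {1, 2}"
    using tail Trip_in_Nd[OF t'] Trip_card[OF t'] by auto
  have in_rows: "Inl (t, j) \<in> rows" "Inr J \<in> rows" "Inr (head t) \<in> rows"
    using t j J Trip_in_Nd[OF t'] by (auto simp: rows_def)
  have distinct: "Inl (t, j) \<noteq> Inr J" "Inl (t, j) \<noteq> Inr (head t)" "Inr J \<noteq> Inr (head t)"
    using J by auto
  from tail consider "j = 1" "J = tail1 t" | "j = 2" "J = tail2 t" by blast
  then have coeff: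
      "\<forall>J'\<in>\<N>. row_coeff (Inr (head t)) J' = row_coeff (Inl (t, j)) J' + row_coeff (Inr J) J'"
    by cases (simp_all add: row_coeff.simps)
  have rhs: "row_rhs (Inr (head t)) = row_rhs (Inl (t, j)) + row_rhs (Inr J)"
    and cost: "outflow_cost (Inr (head t)) < outflow_cost (Inl (t, j)) + outflow_cost (Inr J)"
    using j by auto
  show ?thesis
    by (rule lp_lexicographic_dual_exchange[OF finite_rows in_rows distinct coeff rhs cost z])
qed

lemma lexicographic_dual_complementary:
  assumes z: "lp_lexicographic_dual_optimal \<N> rows row_coeff row_rhs \<beta> outflow_cost z"
  shows "z (Inr J) = 0 \<or> outflow (lam_of z) J = 0"
proof (cases "z (Inr J) = 0")
  case False
  have lam0: "lam_of z t j = 0" if "t \<in> \<T>" "(j, J) \<in> {(1, tail1 t), (2, tail2 t)}" for t j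
  proof (cases "t \<in> active")
    case True
    with lexicographic_dual_tail_exchange[OF z True that(2)] False show ?thesis
      by (simp add: lam_of_def)
  qed (simp add: lam_of_def)
  have "(\<Sum>t | t \<in> \<T> \<and> tail1 t = J. lam_of z t 1) = 0" "(\<Sum>t | t \<in> \<T> \<and> tail2 t = J. lam_of z t 2) = 0"
    using lam0 by (auto intro!: sum.neutral)
  then show ?thesis by (simp add: outflow_def)
qed simp

lemma lexicographic_dual_mip_feasible:
  assumes z: "lp_lexicographic_dual_optimal \<N> rows row_coeff row_rhs \<beta> outflow_cost z"
    and obj: "- \<eta> \<le> mip_obj m Js (lam_of z) (z \<circ> Inr)"
  shows "mip_feas m \<alpha> Js v (lam_of z) (z \<circ> Inr)"
proof -
  let ?lam = "lam_of z" and ?mu = "z \<circ> Inr"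
  have dual: "lp_dual_feasible \<N> rows row_coeff \<beta> z"
    using z by (simp add: lp_lexicographic_dual_optimal_def)
  then have z0: "\<forall>r\<in>rows. 0 \<le> z r" by (simp add: lp_dual_feasible_def)
  then have nonneg: "\<forall>t\<in>\<T>. \<forall>j\<in>{1, 2, 3}. 0 \<le> ?lam t j" and mu: "\<forall>J\<in>\<N>. 0 \<le> ?mu J"
    by (auto simp: lam_of_def rows_def)
  have slack: "\<forall>J\<in>\<N>. 0 \<le> mip_slack ?lam ?mu J"
    using dual by (simp add: lp_dual_feasible_def dual_column_sum)
  have "0 \<le> (\<Sum>J\<in>\<N>. ?mu J)" using mu by (intro sum_nonneg) auto
  then have lam3: "(\<Sum>t\<in>\<T>. ?lam t 3) \<le> \<eta>" using obj by (simp add: mip_obj_def)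
  have rec: "\<forall>J\<in>\<N>. outflow ?lam J \<le> max 0 (\<beta> J + \<eta> + inflow ?lam J)"
  proof
    fix J assume "J \<in> \<N>"
    show "outflow ?lam J \<le> max 0 (\<beta> J + \<eta> + inflow ?lam J)"
    proof (rule outflow_le_from_slack[OF nonneg _ lam3])
      show "0 \<le> mip_slack ?lam ?mu J" using slack \<open>J \<in> \<N>\<close> by blast
      show "?mu J = 0 \<or> outflow ?lam J = 0" using lexicographic_dual_complementary[OF z] by simp
    qed
  qed
  have nonneg12: "\<forall>t\<in>\<T>. 0 \<le> ?lam t 1 \<and> 0 \<le> ?lam t 2" using nonneg by simp
  have "?lam t j \<le> Mc m \<alpha> Js t j * v t" if t: "t \<in> \<T>" and j: "j \<in> {1, 2, 3}" for t j
  proof (cases "t \<in> active")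
    case True
    have "?lam t 3 \<le> (\<Sum>t\<in>\<T>. ?lam t 3)" using nonneg t finite_Trip by (intro member_le_sum) auto
    then have "?lam t 3 \<le> \<eta>" using lam3 by linarith
    moreover note lam_le_Rc[OF nonneg12 rec t]
    ultimately show ?thesis using j active_v[OF True] by (auto simp: Mc_def)
  next
    case False
    then show ?thesis using v_binary[OF t] t by (auto simp: lam_of_def active_def)
  qed
  then show ?thesis using nonneg mu slack by (simp add: mip_feas_iff)
qed

theorem inner_min_eq_mip_max:
  "\<exists>c. (c \<in> {inner_obj m \<alpha> Js y | y. inner_feas m Js v y}
         \<and> (\<forall>x\<in>{inner_obj m \<alpha> Js y | y. inner_feas m Js v y}. c \<le> x))
     \<and> (c \<in> {mip_obj m Js lam mu | lam mu. mip_feas m \<alpha> Js v lam mu}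
         \<and> (\<forall>x\<in>{mip_obj m Js lam mu | lam mu. mip_feas m \<alpha> Js v lam mu}. x \<le> c))"
proof -
  have "\<forall>r\<in>rows. 0 \<le> outflow_cost r" unfolding ball_rows by simp
  from lp_lexicographic_dual_optimum[OF finite_Nd finite_rows primal_feasible_zero
      dual_feasible_mu_only this]
  obtain y z where "lp_primal_feasible \<N> rows row_coeff row_rhs y"
    and z: "lp_lexicographic_dual_optimal \<N> rows row_coeff row_rhs \<beta> outflow_cost z"
    and "(\<Sum>J\<in>\<N>. \<beta> J * y J) = (\<Sum>r\<in>rows. row_rhs r * z r)"
    by blast
  then have y: "inner_feas m Js v y"
    and opt: "inner_obj m \<alpha> Js y = mip_obj m Js (lam_of z) (z \<circ> Inr)"
    by (simp_all add: primal_feasible_iff_inner_feas primal_objective dual_objective)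
  have mip: "mip_feas m \<alpha> Js v (lam_of z) (z \<circ> Inr)"
    using lexicographic_dual_mip_feasible[OF z] inner_obj_lower_bound[OF y] opt by simp
  show ?thesis
  proof (intro exI conjI)
    show "inner_obj m \<alpha> Js y \<in> {inner_obj m \<alpha> Js y | y. inner_feas m Js v y}" using y by blast
    show "inner_obj m \<alpha> Js y \<in> {mip_obj m Js lam mu | lam mu. mip_feas m \<alpha> Js v lam mu}"
      using mip opt by blast
    show "\<forall>x\<in>{inner_obj m \<alpha> Js y | y. inner_feas m Js v y}. inner_obj m \<alpha> Js y \<le> x"
      using mip_weak_duality[OF mip] opt by auto
    show "\<forall>x\<in>{mip_obj m Js lam mu | lam mu. mip_feas m \<alpha> Js v lam mu}. x \<le> inner_obj m \<alpha> Js y"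
      using mip_weak_duality[OF _ y] by auto
  qed
qed

end

theorem theorem4:
  fixes n m :: nat and \<alpha> :: "nat \<Rightarrow> real" and Js :: "nat \<Rightarrow> nat set"
    and k :: int and v :: "triple \<Rightarrow> real"
  assumes "\<forall>i\<in>{1..m}. Js i \<noteq> {} \<and> Js i \<subseteq> {1..n}"
    and "v \<in> Vk m Js k"
  shows "\<exists>c. (c \<in> {inner_obj m \<alpha> Js y | y. inner_feas m Js v y}
              \<and> (\<forall>x\<in>{inner_obj m \<alpha> Js y | y. inner_feas m Js v y}. c \<le> x))
           \<and> (c \<in> {mip_obj m Js lam mu | lam mu. mip_feas m \<alpha> Js v lam mu}
              \<and> (\<forall>x\<in>{mip_obj m Js lam mu | lam mu. mip_feas m \<alpha> Js v lam mu}. x \<le> c))"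
proof -
  \<comment> \<open>only \<open>v \<in> {0, 1}\<close> matters: the flow conditions defining \<open>Vk\<close> and the bound \<open>k\<close> are unused\<close>
  have "fixed_binary_v m Js v"
  proof
    fix i assume "i \<in> {1..m}"
    then show "Js i \<noteq> {}" "finite (Js i)" using assms(1) finite_subset[of "Js i" "{1..n}"] by auto
  next
    fix t assume "t \<in> Trip m Js"
    then show "v t = 0 \<or> v t = 1" using assms(2) by (auto simp: Vk_def Vset_def)
  qed
  then show ?thesis by (rule fixed_binary_v.inner_min_eq_mip_max)
qed

end
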